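(* In a Bayesian network with source $X$ (as in the context), let $W$ be a node and $V$ a set of nodes with $W\notin V$, $W\neq X$ and $W>v$ for all $v\in V$. Then for all $t\ge0$, $$F_{V\cup\{W\}|X}(t)\le F_{V|X}(t)+F_W^c\big(F_{V\cup\mathrm{pa}(W)|X}(t)-F_{V|X}(t)\big),$$ $$F^c_{V\cup\{W\}|X}(t)\le F^c_{V|X}(t)+F_W^c\big(F^c_{V\cup\mathrm{pa}(W)|X}(t)-F^c_{V|X}(t)\big).$$ Furthermore, the right-hand side of the second inequality, as a function of $t\ge0$, is non-negative, concave, nondecreasing and bounded above by $t$.
   Context: Bayesian network: finite directed acyclic graph of random variables $Y_v$ on finite alphabets, each non-source vertex with kernel $P_{Y_v|Y_{\mathrm{pa}(v)}}$, distinguished parentless source $X$, topologically sorted vertices ($v_1>v_2$ implies no directed path from $v_1$ to $v_2$); $P_{V|X}$ is the induced kernel from $X$ to $(Y_v)_{v\in V}$. For a channel $P_{B|A}$, its $F_I$-curve is $F_I(t,P_{B|A})=\sup\{I(U;B): I(U;A)\le t\}$, the supremum over all joint laws $P_{UAB}=P_{UA}P_{B|A}$ (i.e. $U\to A\to B$), and $F_I^c(t,P_{B|A})$ is its least concave majorant on $t\ge0$. Notation: $F_{V|X}=F_I(\cdot,P_{V|X})$, $F^c_{V|X}=F^c_I(\cdot,P_{V|X})$, $F_W^c=F_I^c(\cdot,P_{Y_W|Y_{\mathrm{pa}(W)}})$. *)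

theory Defs
  imports "HOL-Analysis.Analysis"
begin

definition mutual_info :: "'u set \<Rightarrow> 'b set \<Rightarrow> ('u \<Rightarrow> 'b \<Rightarrow> real) \<Rightarrow> real" where
  "mutual_info SU SB p =
     (\<Sum>u\<in>SU. \<Sum>b\<in>SB. if p u b = 0 then 0
        else p u b * ln (p u b / ((\<Sum>b'\<in>SB. p u b') * (\<Sum>u'\<in>SU. p u' b))))"

definition is_pmf2 :: "'u set \<Rightarrow> 'a set \<Rightarrow> ('u \<Rightarrow> 'a \<Rightarrow> real) \<Rightarrow> bool" where
  "is_pmf2 SU SA p \<longleftrightarrow> finite SU \<and> finite SA \<and>
     (\<forall>u\<in>SU. \<forall>a\<in>SA. 0 \<le> p u a) \<and> (\<Sum>u\<in>SU. \<Sum>a\<in>SA. p u a) = 1"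

text \<open>F_I-curve of the channel with input alphabet SA, output alphabet SB and kernel
  K a b = P(B = b | A = a): supremum of I(U;B) over all auxiliary U (finite alphabet,
  embedded in nat) with U - A - B and I(U;A) \<le> t.\<close>
definition F_I :: "'a set \<Rightarrow> 'b set \<Rightarrow> ('a \<Rightarrow> 'b \<Rightarrow> real) \<Rightarrow> real \<Rightarrow> real" where
  "F_I SA SB K t = Sup {mutual_info SU SB (\<lambda>u b. \<Sum>a\<in>SA. p u a * K a b) | (SU :: nat set) p.
       is_pmf2 SU SA p \<and> mutual_info SU SA p \<le> t}"

definition concave_majorant :: "(real \<Rightarrow> real) \<Rightarrow> real \<Rightarrow> real" where
  "concave_majorant F t = Inf {g t | g. concave_on {0..} g \<and> (\<forall>s\<ge>0. F s \<le> g s)}"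

definition F_I_c :: "'a set \<Rightarrow> 'b set \<Rightarrow> ('a \<Rightarrow> 'b \<Rightarrow> real) \<Rightarrow> real \<Rightarrow> real" where
  "F_I_c SA SB K = concave_majorant (F_I SA SB K)"

text \<open>Vertex set Vs (finite), parent map pa, alphabets A v (finite, nonempty,
  all inside a common value type 'a), kernels K v y b = P(Y_v = b | Y_pa(v) = y)
  for parent configurations y \<in> PiE (pa v) A, and a parentless source X.
  Topological sorting: every edge u \<rightarrow> v satisfies u < v.\<close>
definition bayes_net ::
  "'v::linorder set \<Rightarrow> ('v \<Rightarrow> 'v set) \<Rightarrow> ('v \<Rightarrow> 'a set) \<Rightarrow> ('v \<Rightarrow> ('v \<Rightarrow> 'a) \<Rightarrow> 'a \<Rightarrow> real) \<Rightarrow> 'v \<Rightarrow> bool" where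
  "bayes_net Vs pa A K X \<longleftrightarrow> finite Vs \<and> X \<in> Vs \<and> pa X = {} \<and>
     (\<forall>v\<in>Vs. pa v \<subseteq> Vs \<and> (\<forall>u\<in>pa v. u < v)) \<and>
     (\<forall>v\<in>Vs. finite (A v) \<and> A v \<noteq> {}) \<and>
     (\<forall>v\<in>Vs - {X}. \<forall>y\<in>PiE (pa v) A.
        (\<forall>b\<in>A v. 0 \<le> K v y b) \<and> (\<Sum>b\<in>A v. K v y b) = 1)"

text \<open>Induced kernel P_{V|X}(y | x) for a configuration y \<in> PiE V A.\<close>
definition net_kernel ::
  "'v set \<Rightarrow> ('v \<Rightarrow> 'v set) \<Rightarrow> ('v \<Rightarrow> 'a set) \<Rightarrow> ('v \<Rightarrow> ('v \<Rightarrow> 'a) \<Rightarrow> 'a \<Rightarrow> real) \<Rightarrow> 'v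
     \<Rightarrow> 'v set \<Rightarrow> 'a \<Rightarrow> ('v \<Rightarrow> 'a) \<Rightarrow> real" where
  "net_kernel Vs pa A K X V x y =
     (\<Sum>z\<in>{z \<in> PiE Vs A. z X = x \<and> restrict z V = y}.
        \<Prod>v\<in>Vs - {X}. K v (restrict z (pa v)) (z v))"

definition net_F ::
  "'v set \<Rightarrow> ('v \<Rightarrow> 'v set) \<Rightarrow> ('v \<Rightarrow> 'a set) \<Rightarrow> ('v \<Rightarrow> ('v \<Rightarrow> 'a) \<Rightarrow> 'a \<Rightarrow> real) \<Rightarrow> 'v
     \<Rightarrow> 'v set \<Rightarrow> real \<Rightarrow> real" where
  "net_F Vs pa A K X V = F_I (A X) (PiE V A) (net_kernel Vs pa A K X V)"

definition net_F_c ::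
  "'v set \<Rightarrow> ('v \<Rightarrow> 'v set) \<Rightarrow> ('v \<Rightarrow> 'a set) \<Rightarrow> ('v \<Rightarrow> ('v \<Rightarrow> 'a) \<Rightarrow> 'a \<Rightarrow> real) \<Rightarrow> 'v
     \<Rightarrow> 'v set \<Rightarrow> real \<Rightarrow> real" where
  "net_F_c Vs pa A K X V = F_I_c (A X) (PiE V A) (net_kernel Vs pa A K X V)"

definition node_F_c ::
  "('v \<Rightarrow> 'v set) \<Rightarrow> ('v \<Rightarrow> 'a set) \<Rightarrow> ('v \<Rightarrow> ('v \<Rightarrow> 'a) \<Rightarrow> 'a \<Rightarrow> real) \<Rightarrow> 'v \<Rightarrow> real \<Rightarrow> real" where
  "node_F_c pa A K W = F_I_c (PiE (pa W) A) (A W) (K W)"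

end

theory Submission
  imports Defs
begin

text \<open>For an auxiliary U with U - X - Y, the chain rule splits I(U; Y_V, Y_W) into I(U; Y_V) plus
  the average over y_V of I(U; Y_W | Y_V = y_V), and splits I(U; Y_{V \<union> pa(W)}) in the same way.
  Since W lies above every vertex of V, summing out the vertices above W shows that, given
  Y_V = y_V, the variable Y_W is obtained from Y_{pa(W)} by the local kernel of W, so
  U - Y_{pa(W)} - Y_W is a Markov chain through that channel.  Hence each conditional term is at most
  F_W^c of the conditional information carried by Y_{pa(W)}, thus by Y_{V \<union> pa(W)}, and Jensen's
  inequality for the concave F_W^c gives the first bound.  As F_W^c is nondecreasing and
  1-Lipschitz, a + F_W^c(b - a) is monotone in a and b, so the bound survives passing to the concave
  envelopes, and it is itself concave in t.\<close>

section \<open>Mutual information\<close>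

lemma mutual_info_eq:
  "mutual_info SU SB p =
     (\<Sum>u\<in>SU. \<Sum>b\<in>SB. p u b * ln (p u b / ((\<Sum>b'\<in>SB. p u b') * (\<Sum>u'\<in>SU. p u' b))))"
  unfolding mutual_info_def by (intro sum.cong) auto

lemma mutual_info_cong:
  assumes "\<And>u b. u \<in> SU \<Longrightarrow> b \<in> SB \<Longrightarrow> p u b = p' u b"
  shows "mutual_info SU SB p = mutual_info SU SB p'"
  unfolding mutual_info_def using assms by (intro sum.cong refl) (simp cong: sum.cong)

lemma mutual_info_reindex:
  assumes "bij_betw g SB' SB"
  shows "mutual_info SU SB p = mutual_info SU SB' (\<lambda>u b. p u (g b))"
proof -
  have reindex: "(\<Sum>b\<in>SB. f b) = (\<Sum>b\<in>SB'. f (g b))" for f :: "_ \<Rightarrow> real"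
    by (rule sum.reindex_bij_betw[OF assms, symmetric])
  show ?thesis
    unfolding mutual_info_def reindex[of "p _"] by (intro sum.cong refl) (subst reindex, rule refl)
qed

lemma mutual_info_singleton:
  assumes "(\<Sum>a\<in>SA. p u a) = 1"
  shows "mutual_info {u} SA p = 0"
  unfolding mutual_info_eq using assms by (simp add: sum.neutral)

lemma mutual_info_zero: "mutual_info SU SA (\<lambda>u a. 0) = 0"
  unfolding mutual_info_def by simp

lemma x_ln_div_ge_tangent:
  fixes x y c :: real
  assumes "x > 0" "y > 0" "c > 0"
  shows "x * ln c + x - y * c \<le> x * ln (x / y)"
proof -
  define z where "z = x / (y * c)"
  have "z > 0" using assms by (simp add: z_def)
  have "ln (1 / z) \<le> 1 / z - 1"
    using \<open>z > 0\<close> by (intro ln_le_minus_one) simp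
  then have "x * (1 - 1 / z) \<le> x * ln z"
    using \<open>z > 0\<close> \<open>x > 0\<close> by (simp add: ln_div)
  moreover have "ln (x / y) = ln c + ln z"
    using assms by (simp add: z_def ln_div ln_mult)
  moreover have "x * (1 - 1 / z) = x - y * c"
    using assms by (simp add: z_def field_simps)
  ultimately show ?thesis by (simp add: algebra_simps)
qed

lemma log_sum_inequality:
  fixes x y :: "'a \<Rightarrow> real"
  assumes "finite S" and x: "\<And>a. a \<in> S \<Longrightarrow> 0 \<le> x a" and y: "\<And>a. a \<in> S \<Longrightarrow> 0 \<le> y a"
    and supp: "\<And>a. a \<in> S \<Longrightarrow> x a > 0 \<Longrightarrow> y a > 0"
  shows "(\<Sum>a\<in>S. x a) * ln ((\<Sum>a\<in>S. x a) / (\<Sum>a\<in>S. y a)) \<le> (\<Sum>a\<in>S. x a * ln (x a / y a))"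
proof (cases "\<forall>a\<in>S. x a = 0")
  case True
  then show ?thesis by simp
next
  case False
  then obtain a0 where a0: "a0 \<in> S" "x a0 > 0" using x by force
  define XX where "XX = (\<Sum>a\<in>S. x a)"
  define YY where "YY = (\<Sum>a\<in>S. y a)"
  have "x a0 \<le> XX" "y a0 \<le> YY"
    unfolding XX_def YY_def using a0 x y \<open>finite S\<close> by (auto intro: member_le_sum)
  then have "XX > 0" "YY > 0" using a0 supp by fastforce+
  have "x a * ln (XX / YY) + x a - y a * (XX / YY) \<le> x a * ln (x a / y a)" if "a \<in> S" for a
  proof (cases "x a = 0")
    case True
    then show ?thesis using y[OF that] \<open>XX > 0\<close> \<open>YY > 0\<close> by simp
  next
    case False
    then show ?thesis
      using x_ln_div_ge_tangent[of "x a" "y a" "XX / YY"] x supp that \<open>XX > 0\<close> \<open>YY > 0\<close>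
      by fastforce
  qed
  then have "(\<Sum>a\<in>S. x a * ln (XX / YY) + x a - y a * (XX / YY)) \<le> (\<Sum>a\<in>S. x a * ln (x a / y a))"
    by (rule sum_mono)
  moreover have "(\<Sum>a\<in>S. x a * ln (XX / YY) + x a - y a * (XX / YY)) = XX * ln (XX / YY)"
    using \<open>YY > 0\<close> unfolding XX_def YY_def
    by (simp add: sum.distrib sum_subtractf sum_distrib_right[symmetric] sum_divide_distrib[symmetric])
  ultimately show ?thesis unfolding XX_def YY_def by simp
qed

lemma mutual_info_channel_le:
  fixes r :: "'u \<Rightarrow> 'a \<Rightarrow> real" and K :: "'a \<Rightarrow> 'b \<Rightarrow> real"
  assumes "finite SU" "finite SA" "finite SB"
    and r: "\<And>u a. u \<in> SU \<Longrightarrow> a \<in> SA \<Longrightarrow> 0 \<le> r u a"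
    and K: "\<And>a b. a \<in> SA \<Longrightarrow> b \<in> SB \<Longrightarrow> 0 \<le> K a b"
    and K_sum: "\<And>a. a \<in> SA \<Longrightarrow> (\<Sum>b\<in>SB. K a b) = 1"
  shows "mutual_info SU SB (\<lambda>u b. \<Sum>a\<in>SA. r u a * K a b) \<le> mutual_info SU SA r"
proof -
  define Pu where "Pu u = (\<Sum>a\<in>SA. r u a)" for u
  define Pa where "Pa a = (\<Sum>u\<in>SU. r u a)" for a
  define q where "q u b = (\<Sum>a\<in>SA. r u a * K a b)" for u b
  define Qb where "Qb b = (\<Sum>u\<in>SU. q u b)" for b
  define t where "t u a b = r u a * K a b * ln (r u a * K a b / (Pu u * Pa a * K a b))" for u a b
  have q_row: "(\<Sum>b\<in>SB. q u b) = Pu u" for u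
    unfolding q_def Pu_def using K_sum by (subst sum.swap) (simp add: sum_distrib_left[symmetric])
  have q_col: "(\<Sum>a\<in>SA. Pu u * Pa a * K a b) = Pu u * Qb b" for u b
  proof -
    have "(\<Sum>a\<in>SA. Pa a * K a b) = Qb b"
      unfolding Pa_def Qb_def q_def sum_distrib_right by (rule sum.swap)
    then show ?thesis by (simp add: sum_distrib_left[symmetric] mult.assoc)
  qed
  have expand: "r u a * ln (r u a / (Pu u * Pa a)) = (\<Sum>b\<in>SB. t u a b)" if "a \<in> SA" for u a
  proof -
    have "t u a b = K a b * (r u a * ln (r u a / (Pu u * Pa a)))" for b
      unfolding t_def by (cases "K a b = 0") (simp_all add: mult_ac)
    then show ?thesis using K_sum[OF that] by (simp add: sum_distrib_right[symmetric])
  qed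
  have log_sum: "q u b * ln (q u b / (Pu u * Qb b)) \<le> (\<Sum>a\<in>SA. t u a b)"
    if "u \<in> SU" "b \<in> SB" for u b
  proof -
    have "r u a \<le> Pu u" "r u a \<le> Pa a" if "a \<in> SA" for a
      unfolding Pu_def Pa_def using that \<open>u \<in> SU\<close> r assms(1,2)
      by (auto intro!: member_le_sum[where f = "r u"] member_le_sum[where f = "\<lambda>u. r u a"])
    then have "r u a * K a b > 0 \<Longrightarrow> Pu u * Pa a * K a b > 0" if "a \<in> SA" for a
      using that r[OF \<open>u \<in> SU\<close> that] K[OF that \<open>b \<in> SB\<close>]
      by (smt (verit, best) mult_pos_pos zero_less_mult_iff)
    moreover have "0 \<le> Pu u * Pa a * K a b" if "a \<in> SA" for a
      unfolding Pu_def Pa_def using that \<open>u \<in> SU\<close> \<open>b \<in> SB\<close> r K by (simp add: sum_nonneg)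
    ultimately show ?thesis
      using log_sum_inequality[OF assms(2), of "\<lambda>a. r u a * K a b" "\<lambda>a. Pu u * Pa a * K a b"]
        r K that unfolding q_col t_def q_def by simp
  qed
  have "mutual_info SU SB q = (\<Sum>u\<in>SU. \<Sum>b\<in>SB. q u b * ln (q u b / (Pu u * Qb b)))"
    unfolding mutual_info_eq q_row Qb_def ..
  also have "\<dots> \<le> (\<Sum>u\<in>SU. \<Sum>b\<in>SB. \<Sum>a\<in>SA. t u a b)"
    using log_sum by (intro sum_mono) auto
  also have "\<dots> = (\<Sum>u\<in>SU. \<Sum>a\<in>SA. r u a * ln (r u a / (Pu u * Pa a)))"
    using expand by (simp add: sum.swap[of _ SB])
  also have "\<dots> = mutual_info SU SA r"
    unfolding mutual_info_eq Pu_def Pa_def ..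
  finally show ?thesis unfolding q_def .
qed

lemma mutual_info_nonneg:
  assumes "is_pmf2 SU SA r"
  shows "0 \<le> mutual_info SU SA r"
proof -
  have "mutual_info SU {()} (\<lambda>u b. \<Sum>a\<in>SA. r u a * 1) \<le> mutual_info SU SA r"
    using assms unfolding is_pmf2_def by (intro mutual_info_channel_le) auto
  moreover have "mutual_info SU {()} (\<lambda>u b. \<Sum>a\<in>SA. r u a * 1) = 0"
    using assms unfolding is_pmf2_def mutual_info_eq by (simp add: sum.neutral)
  ultimately show ?thesis by simp
qed

definition pushforward :: "('y \<Rightarrow> 'b) \<Rightarrow> 'y set \<Rightarrow> ('u \<Rightarrow> 'y \<Rightarrow> real) \<Rightarrow> 'u \<Rightarrow> 'b \<Rightarrow> real" where
  "pushforward \<pi> SY r u b = (\<Sum>y\<in>{y\<in>SY. \<pi> y = b}. r u y)"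

lemma pushforward_eq_channel:
  assumes "finite SY"
  shows "pushforward \<pi> SY r u b = (\<Sum>y\<in>SY. r u y * (if \<pi> y = b then 1 else 0))"
  unfolding pushforward_def using assms by (simp add: sum.inter_filter if_distrib cong: if_cong)

lemma mutual_info_pushforward_le:
  assumes "finite SU" "finite SY" "finite SB" "\<pi> ` SY \<subseteq> SB"
    and "\<And>u y. u \<in> SU \<Longrightarrow> y \<in> SY \<Longrightarrow> 0 \<le> r u y"
  shows "mutual_info SU SB (pushforward \<pi> SY r) \<le> mutual_info SU SY r"
proof -
  have "(\<Sum>b\<in>SB. if \<pi> y = b then 1 else 0) = (1::real)" if "y \<in> SY" for y
    using that assms(3,4) by auto
  then show ?thesis
    unfolding pushforward_eq_channel[OF assms(2), abs_def]
    using assms by (intro mutual_info_channel_le) auto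
qed

lemma sum_pushforward_mult:
  assumes "finite SY" "finite SB" "\<pi> ` SY \<subseteq> SB"
  shows "(\<Sum>b\<in>SB. pushforward \<pi> SY r u b * f b) = (\<Sum>y\<in>SY. r u y * f (\<pi> y))"
proof -
  have "(\<Sum>b\<in>SB. pushforward \<pi> SY r u b * f b) = (\<Sum>b\<in>SB. \<Sum>y\<in>{y\<in>SY. \<pi> y = b}. r u y * f (\<pi> y))"
    unfolding pushforward_def sum_distrib_right by (intro sum.cong) auto
  also have "\<dots> = (\<Sum>y\<in>SY. r u y * f (\<pi> y))"
    by (rule sum.group[OF assms])
  finally show ?thesis .
qed

lemma scaled_mutual_info_eq:
  assumes "P \<noteq> 0"
  shows "P * mutual_info SU SY (\<lambda>u y. r u y / P)
     = (\<Sum>u\<in>SU. \<Sum>y\<in>SY. r u y * ln (r u y * P / ((\<Sum>y'\<in>SY. r u y') * (\<Sum>u'\<in>SU. r u' y))))"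
proof -
  have "r u y / P / ((\<Sum>y'\<in>SY. r u y' / P) * (\<Sum>u'\<in>SU. r u' y / P))
      = r u y * P / ((\<Sum>y'\<in>SY. r u y') * (\<Sum>u'\<in>SU. r u' y))" for u y
    using assms by (simp add: sum_divide_distrib[symmetric] field_simps)
  then show ?thesis
    unfolding mutual_info_eq using assms by (simp add: sum_distrib_left)
qed

lemma mutual_info_pushforward_eq:
  assumes "finite SY" "finite SB" "\<pi> ` SY \<subseteq> SB"
  shows "mutual_info SU SB (pushforward \<pi> SY r) = (\<Sum>u\<in>SU. \<Sum>y\<in>SY.
     r u y * ln (pushforward \<pi> SY r u (\<pi> y) / ((\<Sum>y'\<in>SY. r u y') * (\<Sum>u'\<in>SU. pushforward \<pi> SY r u' (\<pi> y)))))"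
proof -
  have "(\<Sum>b\<in>SB. pushforward \<pi> SY r u b) = (\<Sum>y\<in>SY. r u y)" for u
    using sum_pushforward_mult[OF assms, of r u "\<lambda>_. 1"] by simp
  moreover have "(\<Sum>b\<in>SB. pushforward \<pi> SY r u b * f b) = (\<Sum>y\<in>SY. r u y * f (\<pi> y))" for u f
    by (rule sum_pushforward_mult[OF assms])
  ultimately show ?thesis
    unfolding mutual_info_eq by simp
qed

lemma mutual_info_chain_rule:
  fixes SU :: "'u set" and SY :: "'y set" and r :: "'u \<Rightarrow> 'y \<Rightarrow> real" and \<pi> :: "'y \<Rightarrow> 'b"
  defines "P b \<equiv> (\<Sum>u\<in>SU. pushforward \<pi> SY r u b)"
  assumes "finite SU" "finite SY" "finite SB" "\<pi> ` SY \<subseteq> SB"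
    and r: "\<And>u y. u \<in> SU \<Longrightarrow> y \<in> SY \<Longrightarrow> 0 \<le> r u y"
  shows "mutual_info SU SY r = mutual_info SU SB (pushforward \<pi> SY r)
     + (\<Sum>b\<in>SB. P b * mutual_info SU {y\<in>SY. \<pi> y = b} (\<lambda>u y. r u y / P b))"
proof -
  define F where "F b = {y\<in>SY. \<pi> y = b}" for b
  define s where "s = pushforward \<pi> SY r"
  define Pu where "Pu u = (\<Sum>y\<in>SY. r u y)" for u
  define Py where "Py y = (\<Sum>u\<in>SU. r u y)" for y
  have r_le: "r u y \<le> Pu u" "r u y \<le> Py y" "r u y \<le> s u (\<pi> y)" "s u (\<pi> y) \<le> P (\<pi> y)"
    if "u \<in> SU" "y \<in> SY" for u y
    using that r assms(2,3) unfolding Pu_def Py_def s_def P_def pushforward_def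
    by (auto intro!: member_le_sum[where f = "r u"] member_le_sum[where f = "\<lambda>u. r u y"]
        member_le_sum[where f = "\<lambda>u. pushforward \<pi> SY r u (\<pi> y)", unfolded pushforward_def] sum_nonneg)
  have split: "r u y * ln (r u y / (Pu u * Py y))
      = r u y * ln (s u (\<pi> y) / (Pu u * P (\<pi> y))) + r u y * ln (r u y * P (\<pi> y) / (s u (\<pi> y) * Py y))"
    if "u \<in> SU" "y \<in> SY" for u y
  proof (cases "r u y = 0")
    case False
    then have "r u y > 0" using r that by force
    then show ?thesis
      using r_le[OF that] by (simp add: ln_div ln_mult algebra_simps)
  qed simp
  have cond: "(\<Sum>u\<in>SU. \<Sum>y\<in>F b. r u y * ln (r u y * P b / (s u b * Py y)))
      = P b * mutual_info SU (F b) (\<lambda>u y. r u y / P b)" for b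
  proof (cases "P b = 0")
    case True
    then have "r u y = 0" if "u \<in> SU" "y \<in> F b" for u y
      using that r_le[of u y] r[of u y] unfolding F_def by fastforce
    then show ?thesis using True by simp
  next
    case False
    then show ?thesis
      unfolding scaled_mutual_info_eq[OF False] s_def pushforward_def F_def Py_def by simp
  qed
  have "mutual_info SU SY r = (\<Sum>u\<in>SU. \<Sum>y\<in>SY. r u y * ln (r u y / (Pu u * Py y)))"
    unfolding mutual_info_eq Pu_def Py_def ..
  also have "\<dots> = mutual_info SU SB s
      + (\<Sum>u\<in>SU. \<Sum>b\<in>SB. \<Sum>y\<in>F b. r u y * ln (r u y * P b / (s u b * Py y)))"
    unfolding s_def mutual_info_pushforward_eq[OF assms(3-5)] F_def
    using split sum.group[OF assms(3-5), of "\<lambda>y. r _ y * ln (r _ y * P (\<pi> y) / (s _ (\<pi> y) * Py y))"]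
    by (simp add: sum.distrib Pu_def P_def s_def)
  also have "\<dots> = mutual_info SU SB s + (\<Sum>b\<in>SB. P b * mutual_info SU (F b) (\<lambda>u y. r u y / P b))"
    unfolding cond[symmetric] by (subst sum.swap) rule
  finally show ?thesis unfolding s_def F_def .
qed

lemma mutual_info_normalized_nonneg:
  assumes "finite SU" "finite SY" "\<And>u y. u \<in> SU \<Longrightarrow> y \<in> SY \<Longrightarrow> 0 \<le> r u y"
  shows "0 \<le> mutual_info SU SY (\<lambda>u y. r u y / (\<Sum>u\<in>SU. \<Sum>y\<in>SY. r u y))"
proof (cases "(\<Sum>u\<in>SU. \<Sum>y\<in>SY. r u y) = 0")
  case True
  then show ?thesis by (simp add: mutual_info_zero)
next
  case False
  then have "is_pmf2 SU SY (\<lambda>u y. r u y / (\<Sum>u\<in>SU. \<Sum>y\<in>SY. r u y))"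
    using assms sum_nonneg[of SU "\<lambda>u. \<Sum>y\<in>SY. r u y"]
    unfolding is_pmf2_def by (auto simp: sum_divide_distrib[symmetric] sum_nonneg)
  then show ?thesis by (rule mutual_info_nonneg)
qed

section \<open>Concave majorants and F_I-curves\<close>

lemma concave_on_nonneg_mono:
  fixes f :: "real \<Rightarrow> real"
  assumes f: "concave_on {0..} f" and f_nonneg: "\<And>s. s \<ge> 0 \<Longrightarrow> 0 \<le> f s"
    and "0 \<le> a" "a \<le> b"
  shows "f a \<le> f b"
proof (rule ccontr)
  assume "\<not> f a \<le> f b"
  define d where "d = f a - f b"
  have "d > 0" "f a > 0" "a < b"
    using \<open>\<not> f a \<le> f b\<close> f_nonneg[of b] assms(3,4) by (auto simp: d_def less_le)
  \<comment> \<open>by concavity f lies below the line through (a, f a) and (b, f b) to the right of b,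
      so a drop would make f negative far out; c is such a far point, b = (1 - \<theta>) a + \<theta> c\<close>
  define \<theta> where "\<theta> = d / (2 * f a + d)"
  define c where "c = a + (b - a) / \<theta>"
  have "0 < \<theta>" "\<theta> < 1" using \<open>d > 0\<close> \<open>f a > 0\<close> by (auto simp: \<theta>_def field_simps)
  have "c \<ge> 0" using \<open>0 < \<theta>\<close> \<open>a < b\<close> \<open>0 \<le> a\<close> by (simp add: c_def)
  have "(1 - \<theta>) * f a + \<theta> * f c \<le> f ((1 - \<theta>) *\<^sub>R a + \<theta> *\<^sub>R c)"
    using concave_onD[OF f, of \<theta> a c] \<open>0 < \<theta>\<close> \<open>\<theta> < 1\<close> \<open>0 \<le> a\<close> \<open>c \<ge> 0\<close> by simp
  also have "(1 - \<theta>) *\<^sub>R a + \<theta> *\<^sub>R c = b"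
    using \<open>0 < \<theta>\<close> by (simp add: c_def field_simps)
  finally have "(1 - \<theta>) * f a \<le> f b"
    using f_nonneg[OF \<open>c \<ge> 0\<close>] \<open>0 < \<theta>\<close> by (smt (verit) mult_nonneg_nonneg)
  then have "d \<le> \<theta> * f a"
    unfolding d_def by (simp add: algebra_simps)
  moreover have "\<theta> * f a < d"
    using \<open>d > 0\<close> \<open>f a > 0\<close> unfolding \<theta>_def by (simp add: field_simps add_pos_pos)
  ultimately show False by simp
qed

lemma concave_on_increment_le:
  fixes f :: "real \<Rightarrow> real"
  assumes f: "concave_on {0..} f" and "0 \<le> f 0" and f_le: "\<And>s. s \<ge> 0 \<Longrightarrow> f s \<le> s"
    and "0 \<le> s1" "s1 \<le> s2"
  shows "f s2 - f s1 \<le> s2 - s1"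
proof (cases "s2 = 0")
  case False
  then have "s2 > 0" using assms(4,5) by simp
  define \<mu> where "\<mu> = s1 / s2"
  have "0 \<le> \<mu>" "\<mu> \<le> 1" using assms(4,5) \<open>s2 > 0\<close> by (auto simp: \<mu>_def field_simps)
  have "(1 - \<mu>) * f 0 + \<mu> * f s2 \<le> f ((1 - \<mu>) *\<^sub>R 0 + \<mu> *\<^sub>R s2)"
    using concave_onD[OF f, of \<mu> 0 s2] \<open>0 \<le> \<mu>\<close> \<open>\<mu> \<le> 1\<close> \<open>s2 > 0\<close> by simp
  also have "(1 - \<mu>) *\<^sub>R 0 + \<mu> *\<^sub>R s2 = s1" using \<open>s2 > 0\<close> by (simp add: \<mu>_def)
  finally have "\<mu> * f s2 \<le> f s1"
    using \<open>0 \<le> f 0\<close> \<open>\<mu> \<le> 1\<close> by (smt (verit) mult_nonneg_nonneg)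
  moreover have "(1 - \<mu>) * f s2 \<le> (1 - \<mu>) * s2"
    using f_le \<open>s2 > 0\<close> \<open>\<mu> \<le> 1\<close> by (intro mult_left_mono) auto
  moreover have "(1 - \<mu>) * s2 = s2 - s1" using \<open>s2 > 0\<close> by (simp add: \<mu>_def field_simps)
  ultimately show ?thesis by (simp add: algebra_simps)
qed (use assms in simp)

lemma concave_on_id_nonneg: "concave_on {0..} (\<lambda>x::real. x)"
  unfolding concave_on_iff by (auto simp: convex_real_interval)

locale bounded_curve =
  fixes F :: "real \<Rightarrow> real"
  assumes bounded: "\<And>s. s \<ge> 0 \<Longrightarrow> 0 \<le> F s \<and> F s \<le> s"
begin

definition majorant_values :: "real \<Rightarrow> real set" where
  "majorant_values t = {g t | g. concave_on {0..} g \<and> (\<forall>s\<ge>0. F s \<le> g s)}"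

lemma concave_majorant_eq_Inf: "concave_majorant F t = Inf (majorant_values t)"
  unfolding concave_majorant_def majorant_values_def ..

lemma self_in_majorant_values: "t \<in> majorant_values t"
  unfolding majorant_values_def using concave_on_id_nonneg bounded by force

lemma concave_majorant_ge: "t \<ge> 0 \<Longrightarrow> F t \<le> concave_majorant F t"
  unfolding concave_majorant_eq_Inf using self_in_majorant_values
  by (intro cInf_greatest) (auto simp: majorant_values_def)

lemma concave_majorant_least:
  assumes "t \<ge> 0" "concave_on {0..} G" "\<And>s. s \<ge> 0 \<Longrightarrow> F s \<le> G s"
  shows "concave_majorant F t \<le> G t"
  unfolding concave_majorant_eq_Inf using assms
  by (intro cInf_lower) (auto simp: majorant_values_def bdd_below_def intro!: exI[of _ "F t"])

lemma concave_majorant_le_id: "t \<ge> 0 \<Longrightarrow> concave_majorant F t \<le> t"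
  using concave_majorant_least[OF _ concave_on_id_nonneg] bounded by auto

lemma concave_majorant_nonneg: "t \<ge> 0 \<Longrightarrow> 0 \<le> concave_majorant F t"
  using concave_majorant_ge bounded by (meson order_trans)

lemma concave_on_concave_majorant: "concave_on {0..} (concave_majorant F)"
  unfolding concave_on_iff
proof (intro conjI ballI allI impI)
  fix x y u v :: real
  assume "x \<in> {0..}" "y \<in> {0..}" "0 \<le> u" "0 \<le> v" "u + v = 1"
  show "u * concave_majorant F x + v * concave_majorant F y \<le> concave_majorant F (u *\<^sub>R x + v *\<^sub>R y)"
    unfolding concave_majorant_eq_Inf[of "u *\<^sub>R x + v *\<^sub>R y"]
  proof (rule cInf_greatest)
    fix z assume "z \<in> majorant_values (u *\<^sub>R x + v *\<^sub>R y)"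
    then obtain g where z: "z = g (u *\<^sub>R x + v *\<^sub>R y)" and g: "concave_on {0..} g" "\<forall>s\<ge>0. F s \<le> g s"
      unfolding majorant_values_def by blast
    have "u * g x + v * g y \<le> z"
      unfolding z using g(1) \<open>x \<in> {0..}\<close> \<open>y \<in> {0..}\<close> \<open>0 \<le> u\<close> \<open>0 \<le> v\<close> \<open>u + v = 1\<close>
      unfolding concave_on_iff by blast
    moreover have "concave_majorant F x \<le> g x" "concave_majorant F y \<le> g y"
      using concave_majorant_least g \<open>x \<in> {0..}\<close> \<open>y \<in> {0..}\<close> by auto
    ultimately show "u * concave_majorant F x + v * concave_majorant F y \<le> z"
      using \<open>0 \<le> u\<close> \<open>0 \<le> v\<close> by (smt (verit) mult_left_mono)
  qed (use self_in_majorant_values in blast)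
qed (simp add: convex_real_interval)

lemma concave_majorant_mono: "0 \<le> a \<Longrightarrow> a \<le> b \<Longrightarrow> concave_majorant F a \<le> concave_majorant F b"
  using concave_on_nonneg_mono[OF concave_on_concave_majorant] concave_majorant_nonneg by blast

lemma concave_majorant_increment_le:
  "0 \<le> s1 \<Longrightarrow> s1 \<le> s2 \<Longrightarrow> concave_majorant F s2 - concave_majorant F s1 \<le> s2 - s1"
  using concave_on_increment_le[OF concave_on_concave_majorant]
    concave_majorant_nonneg concave_majorant_le_id by auto

lemma add_concave_majorant_diff_mono:
  assumes "a \<le> a'" "b \<le> b'" "a \<le> b" "a' \<le> b'"
  shows "a + concave_majorant F (b - a) \<le> a' + concave_majorant F (b' - a')"
proof (cases "b \<le> a'")
  case True
  have "concave_majorant F (b - a) \<le> b - a" using concave_majorant_le_id assms by simp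
  moreover have "0 \<le> concave_majorant F (b' - a')" using concave_majorant_nonneg assms by simp
  ultimately show ?thesis using True by simp
next
  case False
  have "concave_majorant F (b - a) - concave_majorant F (b - a') \<le> (b - a) - (b - a')"
    using concave_majorant_increment_le[of "b - a'" "b - a"] False assms by simp
  moreover have "concave_majorant F (b - a') \<le> concave_majorant F (b' - a')"
    using concave_majorant_mono[of "b - a'" "b' - a'"] False assms by simp
  ultimately show ?thesis by simp
qed

context
  fixes f g :: "real \<Rightarrow> real"
  assumes f: "concave_on {0..} f" "mono_on {0..} f" and g: "concave_on {0..} g" "mono_on {0..} g"
    and f_le_g: "\<And>t. t \<ge> 0 \<Longrightarrow> 0 \<le> f t \<and> f t \<le> g t \<and> g t \<le> t"
begin

lemma concave_on_add_concave_majorant_diff: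
  "concave_on {0..} (\<lambda>t. f t + concave_majorant F (g t - f t))"
  unfolding concave_on_iff
proof (intro conjI ballI allI impI)
  fix x y u v :: real
  assume "x \<in> {0..}" "y \<in> {0..}" "0 \<le> u" "0 \<le> v" "u + v = 1"
  define m where "m = u *\<^sub>R x + v *\<^sub>R y"
  let ?fm = "u * f x + v * f y" and ?gm = "u * g x + v * g y" and ?h = "concave_majorant F"
  have "m \<ge> 0" using \<open>x \<in> {0..}\<close> \<open>y \<in> {0..}\<close> \<open>0 \<le> u\<close> \<open>0 \<le> v\<close> by (simp add: m_def)
  have "?fm \<le> f m" "?gm \<le> g m"
    using f(1) g(1) \<open>x \<in> {0..}\<close> \<open>y \<in> {0..}\<close> \<open>0 \<le> u\<close> \<open>0 \<le> v\<close> \<open>u + v = 1\<close>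
    unfolding m_def concave_on_iff by blast+
  moreover have "?fm \<le> ?gm"
    using f_le_g \<open>x \<in> {0..}\<close> \<open>y \<in> {0..}\<close> \<open>0 \<le> u\<close> \<open>0 \<le> v\<close> by (simp add: add_mono mult_left_mono)
  ultimately have "?fm + ?h (?gm - ?fm) \<le> f m + ?h (g m - f m)"
    using f_le_g[OF \<open>m \<ge> 0\<close>] by (intro add_concave_majorant_diff_mono) auto
  moreover have "u * ?h (g x - f x) + v * ?h (g y - f y) \<le> ?h (u *\<^sub>R (g x - f x) + v *\<^sub>R (g y - f y))"
    using concave_on_concave_majorant f_le_g \<open>x \<in> {0..}\<close> \<open>y \<in> {0..}\<close> \<open>0 \<le> u\<close> \<open>0 \<le> v\<close> \<open>u + v = 1\<close>
    unfolding concave_on_iff by auto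
  moreover have "u *\<^sub>R (g x - f x) + v *\<^sub>R (g y - f y) = ?gm - ?fm"
    by (simp add: algebra_simps)
  ultimately show "u * (f x + ?h (g x - f x)) + v * (f y + ?h (g y - f y))
      \<le> f (u *\<^sub>R x + v *\<^sub>R y) + ?h (g (u *\<^sub>R x + v *\<^sub>R y) - f (u *\<^sub>R x + v *\<^sub>R y))"
    unfolding m_def[symmetric] by (simp add: algebra_simps)
qed (simp add: convex_real_interval)

lemma mono_on_add_concave_majorant_diff:
  "mono_on {0..} (\<lambda>t. f t + concave_majorant F (g t - f t))"
proof (rule mono_onI)
  fix r s :: real assume "r \<in> {0..}" "s \<in> {0..}" "r \<le> s"
  then show "f r + concave_majorant F (g r - f r) \<le> f s + concave_majorant F (g s - f s)"
    using f_le_g[of r] f_le_g[of s] mono_onD[OF f(2)] mono_onD[OF g(2)]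
    by (intro add_concave_majorant_diff_mono) auto
qed

lemma add_concave_majorant_diff_bounds:
  assumes "t \<ge> 0"
  shows "0 \<le> f t + concave_majorant F (g t - f t)" "f t + concave_majorant F (g t - f t) \<le> t"
  using f_le_g[OF assms] concave_majorant_nonneg[of "g t - f t"] concave_majorant_le_id[of "g t - f t"]
  by auto

end

end

lemma concave_majorant_le_concave_majorant:
  assumes "bounded_curve F1" "bounded_curve F2" "\<And>s. s \<ge> 0 \<Longrightarrow> F1 s \<le> F2 s" "t \<ge> 0"
  shows "concave_majorant F1 t \<le> concave_majorant F2 t"
  using bounded_curve.concave_majorant_least[OF assms(1,4)
      bounded_curve.concave_on_concave_majorant[OF assms(2)]]
    bounded_curve.concave_majorant_ge[OF assms(2)] assms(3)
  by (meson order_trans)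

definition achievable_info :: "'a set \<Rightarrow> 'b set \<Rightarrow> ('a \<Rightarrow> 'b \<Rightarrow> real) \<Rightarrow> real \<Rightarrow> real set" where
  "achievable_info SA SB K t = {mutual_info SU SB (\<lambda>u b. \<Sum>a\<in>SA. p u a * K a b) | (SU :: nat set) p.
       is_pmf2 SU SA p \<and> mutual_info SU SA p \<le> t}"

lemma F_I_eq_Sup: "F_I SA SB K t = Sup (achievable_info SA SB K t)"
  unfolding F_I_def achievable_info_def ..

locale channel =
  fixes SA :: "'a set" and SB :: "'b set" and K :: "'a \<Rightarrow> 'b \<Rightarrow> real"
  assumes finite_SA: "finite SA" and SA_nonempty: "SA \<noteq> {}" and finite_SB: "finite SB"
    and K_nonneg: "\<And>a b. a \<in> SA \<Longrightarrow> b \<in> SB \<Longrightarrow> 0 \<le> K a b"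
    and K_sum: "\<And>a. a \<in> SA \<Longrightarrow> (\<Sum>b\<in>SB. K a b) = 1"
begin

lemma achievable_info_le:
  assumes "x \<in> achievable_info SA SB K t"
  shows "x \<le> t"
proof -
  obtain SU :: "nat set" and p where x: "x = mutual_info SU SB (\<lambda>u b. \<Sum>a\<in>SA. p u a * K a b)"
    and p: "is_pmf2 SU SA p" and "mutual_info SU SA p \<le> t"
    using assms unfolding achievable_info_def by blast
  have "x \<le> mutual_info SU SA p"
    unfolding x using p finite_SB K_nonneg K_sum unfolding is_pmf2_def
    by (intro mutual_info_channel_le) auto
  with \<open>mutual_info SU SA p \<le> t\<close> show ?thesis by simp
qed

lemma zero_in_achievable_info:
  assumes "t \<ge> 0"
  shows "0 \<in> achievable_info SA SB K t"
proof -
  obtain a0 where "a0 \<in> SA" using SA_nonempty by blast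
  define p :: "nat \<Rightarrow> 'a \<Rightarrow> real" where "p u a = (if a = a0 then 1 else 0)" for u a
  have "(\<Sum>a\<in>SA. p 0 a) = 1" "is_pmf2 {0} SA p"
    unfolding p_def is_pmf2_def using finite_SA \<open>a0 \<in> SA\<close> by auto
  moreover have "(\<Sum>b\<in>SB. \<Sum>a\<in>SA. p 0 a * K a b) = 1"
    unfolding p_def using finite_SA \<open>a0 \<in> SA\<close> K_sum
    by (simp add: if_distrib[of "\<lambda>x. x * _"] cong: if_cong)
  ultimately have "mutual_info {0} SA p = 0" "mutual_info {0} SB (\<lambda>u b. \<Sum>a\<in>SA. p u a * K a b) = 0"
    by (simp_all add: mutual_info_singleton)
  with \<open>is_pmf2 {0} SA p\<close> show ?thesis
    unfolding achievable_info_def using assms by force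
qed

lemma bdd_above_achievable_info: "bdd_above (achievable_info SA SB K t)"
  using achievable_info_le by (intro bdd_aboveI) blast

lemma F_I_nonneg: "t \<ge> 0 \<Longrightarrow> 0 \<le> F_I SA SB K t"
  unfolding F_I_eq_Sup
  using zero_in_achievable_info bdd_above_achievable_info by (rule cSup_upper)

lemma F_I_le: "t \<ge> 0 \<Longrightarrow> F_I SA SB K t \<le> t"
  unfolding F_I_eq_Sup using zero_in_achievable_info achievable_info_le by (intro cSup_least) auto

lemma mutual_info_le_F_I:
  fixes SU :: "nat set"
  assumes "is_pmf2 SU SA p" "mutual_info SU SA p \<le> t"
  shows "mutual_info SU SB (\<lambda>u b. \<Sum>a\<in>SA. p u a * K a b) \<le> F_I SA SB K t"
  unfolding F_I_eq_Sup using assms bdd_above_achievable_info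
  unfolding achievable_info_def by (intro cSup_upper) auto

lemma F_I_le_iff:
  assumes "t \<ge> 0"
  shows "F_I SA SB K t \<le> c \<longleftrightarrow> (\<forall>(SU :: nat set) p. is_pmf2 SU SA p \<longrightarrow> mutual_info SU SA p \<le> t
            \<longrightarrow> mutual_info SU SB (\<lambda>u b. \<Sum>a\<in>SA. p u a * K a b) \<le> c)"
  unfolding F_I_eq_Sup
  using zero_in_achievable_info[OF assms] bdd_above_achievable_info
  by (subst cSup_le_iff) (auto simp: achievable_info_def)

lemma bounded_curve_F_I: "bounded_curve (F_I SA SB K)"
  unfolding bounded_curve_def using F_I_nonneg F_I_le by blast

lemma mutual_info_through_channel_le:
  fixes SU :: "nat set" and r :: "nat \<Rightarrow> 'y \<Rightarrow> real"
  assumes r: "is_pmf2 SU SY r" and \<pi>: "\<pi> ` SY \<subseteq> SA"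
  shows "mutual_info SU SB (\<lambda>u b. \<Sum>y\<in>SY. r u y * K (\<pi> y) b)
       \<le> concave_majorant (F_I SA SB K) (mutual_info SU SY r)"
proof -
  interpret bounded_curve "F_I SA SB K" by (rule bounded_curve_F_I)
  define r_\<pi> where "r_\<pi> = pushforward \<pi> SY r"
  have "finite SU" "finite SY" "\<And>u y. u \<in> SU \<Longrightarrow> y \<in> SY \<Longrightarrow> 0 \<le> r u y"
    using r unfolding is_pmf2_def by auto
  have "is_pmf2 SU SA r_\<pi>"
    using r sum_pushforward_mult[OF \<open>finite SY\<close> finite_SA \<pi>, of r _ "\<lambda>_. 1"] finite_SA
    unfolding is_pmf2_def r_\<pi>_def by (auto simp: pushforward_def intro!: sum_nonneg)
  have "mutual_info SU SB (\<lambda>u b. \<Sum>y\<in>SY. r u y * K (\<pi> y) b)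
      = mutual_info SU SB (\<lambda>u b. \<Sum>a\<in>SA. r_\<pi> u a * K a b)"
    unfolding r_\<pi>_def sum_pushforward_mult[OF \<open>finite SY\<close> finite_SA \<pi>] ..
  also have "\<dots> \<le> concave_majorant (F_I SA SB K) (mutual_info SU SA r_\<pi>)"
    using mutual_info_le_F_I[OF \<open>is_pmf2 SU SA r_\<pi>\<close> order_refl]
      concave_majorant_ge[OF mutual_info_nonneg[OF \<open>is_pmf2 SU SA r_\<pi>\<close>]] by linarith
  also have "\<dots> \<le> concave_majorant (F_I SA SB K) (mutual_info SU SY r)"
    unfolding r_\<pi>_def using mutual_info_nonneg[OF \<open>is_pmf2 SU SA r_\<pi>\<close>] \<open>finite SU\<close> \<open>finite SY\<close> finite_SA \<pi> r
    by (intro concave_majorant_mono mutual_info_pushforward_le) (auto simp: r_\<pi>_def is_pmf2_def)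
  finally show ?thesis .
qed

end

section \<open>Bayesian networks\<close>

lemma sum_PiE_insert:
  assumes "x \<notin> S"
  shows "(\<Sum>f\<in>PiE (insert x S) T. g f) = (\<Sum>a\<in>T x. \<Sum>f\<in>PiE S T. g (f(x := a)))"
proof -
  have "(\<Sum>f\<in>PiE (insert x S) T. g f) = (\<Sum>p\<in>T x \<times> PiE S T. g ((\<lambda>(y, f). f(x := y)) p))"
    unfolding PiE_insert_eq by (rule sum.reindex[OF inj_combinator[OF assms], unfolded comp_def])
  then show ?thesis
    unfolding sum.cartesian_product by (simp add: case_prod_beta)
qed

lemma restrict_in_PiE: "z \<in> PiE I A \<Longrightarrow> S \<subseteq> I \<Longrightarrow> restrict z S \<in> PiE S A"
  by (auto simp: PiE_iff)

lemma sum_PiE_split: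
  fixes A :: "'i \<Rightarrow> 'x set" and f :: "('i \<Rightarrow> 'x) \<Rightarrow> 'r::comm_monoid_add"
  assumes "H \<subseteq> I"
  shows "(\<Sum>z\<in>PiE I A. f z)
       = (\<Sum>l\<in>PiE (I - H) A. \<Sum>h\<in>PiE H A. f (override_on l h H))"
proof -
  define glue :: "('i \<Rightarrow> 'x) \<times> ('i \<Rightarrow> 'x) \<Rightarrow> 'i \<Rightarrow> 'x"
    where "glue = (\<lambda>(l, h). override_on l h H)"
  have "bij_betw glue (PiE (I - H) A \<times> PiE H A) (PiE I A)"
  proof (rule bij_betwI[where g = "\<lambda>z. (restrict z (I - H), restrict z H)"])
    show "glue \<in> PiE (I - H) A \<times> PiE H A \<rightarrow> PiE I A"
      using assms by (auto simp: glue_def override_on_def PiE_iff extensional_def)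
    show "(\<lambda>z. (restrict z (I - H), restrict z H)) \<in> PiE I A \<rightarrow> PiE (I - H) A \<times> PiE H A"
      using assms by (auto simp: PiE_iff)
    show "(restrict (glue p) (I - H), restrict (glue p) H) = p" if "p \<in> PiE (I - H) A \<times> PiE H A" for p
      using that by (auto simp: glue_def override_on_def PiE_iff extensional_def fun_eq_iff)
    show "glue (restrict z (I - H), restrict z H) = z" if "z \<in> PiE I A" for z
      using that assms by (auto simp: glue_def override_on_def PiE_iff extensional_def fun_eq_iff)
  qed
  then have "(\<Sum>z\<in>PiE I A. f z) = (\<Sum>p\<in>PiE (I - H) A \<times> PiE H A. f (glue p))"
    by (rule sum.reindex_bij_betw[symmetric])
  then show ?thesis
    unfolding sum.cartesian_product glue_def by (simp add: case_prod_beta)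
qed

lemma bij_betw_fun_upd_fiber:
  assumes "b \<in> PiE V A" "W \<notin> V"
  shows "bij_betw (\<lambda>w. b(W := w)) (A W) {y\<in>PiE (V \<union> {W}) A. restrict y V = b}"
proof (rule bij_betwI[where g = "\<lambda>y. y W"])
  show "(\<lambda>w. b(W := w)) \<in> A W \<rightarrow> {y\<in>PiE (V \<union> {W}) A. restrict y V = b}"
    using assms by (auto simp: PiE_iff extensional_def fun_eq_iff)
  show "(\<lambda>y. y W) \<in> {y\<in>PiE (V \<union> {W}) A. restrict y V = b} \<rightarrow> A W"
    by auto
  show "b(W := y W) = y" if "y \<in> {y\<in>PiE (V \<union> {W}) A. restrict y V = b}" for y
    using that by (auto simp: PiE_iff extensional_def fun_eq_iff) (metis (full_types))
qed simp

lemma node_F_c_eq: "node_F_c pa A K W = concave_majorant (F_I (PiE (pa W) A) (A W) (K W))"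
  unfolding node_F_c_def F_I_c_def ..

lemma net_F_c_eq: "net_F_c Vs pa A K X S = concave_majorant (net_F Vs pa A K X S)"
  unfolding net_F_c_def F_I_c_def net_F_def ..

locale bayesian_network =
  fixes Vs :: "'v::linorder set" and pa :: "'v \<Rightarrow> 'v set" and A :: "'v \<Rightarrow> 'a set"
    and K :: "'v \<Rightarrow> ('v \<Rightarrow> 'a) \<Rightarrow> 'a \<Rightarrow> real" and X :: 'v
  assumes net: "bayes_net Vs pa A K X"
begin

lemma finite_Vs: "finite Vs" and X_in_Vs: "X \<in> Vs"
  and pa_subset: "v \<in> Vs \<Longrightarrow> pa v \<subseteq> Vs" and pa_less: "v \<in> Vs \<Longrightarrow> u \<in> pa v \<Longrightarrow> u < v"
  and finite_A: "v \<in> Vs \<Longrightarrow> finite (A v)" and A_nonempty: "v \<in> Vs \<Longrightarrow> A v \<noteq> {}"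
  and K_nonneg: "v \<in> Vs \<Longrightarrow> v \<noteq> X \<Longrightarrow> y \<in> PiE (pa v) A \<Longrightarrow> b \<in> A v \<Longrightarrow> 0 \<le> K v y b"
  and K_sum: "v \<in> Vs \<Longrightarrow> v \<noteq> X \<Longrightarrow> y \<in> PiE (pa v) A \<Longrightarrow> (\<Sum>b\<in>A v. K v y b) = 1"
  using net unfolding bayes_net_def by blast+

lemma finite_PiE_A: "S \<subseteq> Vs \<Longrightarrow> finite (PiE S A)"
  using finite_Vs finite_A by (intro finite_PiE) (auto intro: finite_subset)

lemma PiE_A_nonempty: "S \<subseteq> Vs \<Longrightarrow> PiE S A \<noteq> {}"
  using A_nonempty by (auto simp: PiE_eq_empty_iff)

definition kernel_prod :: "'v set \<Rightarrow> ('v \<Rightarrow> 'a) \<Rightarrow> real" where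
  "kernel_prod S z = (\<Prod>v\<in>S - {X}. K v (restrict z (pa v)) (z v))"

lemma kernel_prod_nonneg: "z \<in> PiE Vs A \<Longrightarrow> 0 \<le> kernel_prod Vs z"
  unfolding kernel_prod_def using pa_subset
  by (intro prod_nonneg K_nonneg restrict_in_PiE[of z Vs]) (auto simp: PiE_iff)

lemma kernel_prod_cong:
  assumes "\<And>v w. v \<in> S - {X} \<Longrightarrow> w \<in> insert v (pa v) \<Longrightarrow> z w = z' w"
  shows "kernel_prod S z = kernel_prod S z'"
proof -
  have "restrict z (pa v) = restrict z' (pa v)" if "v \<in> S - {X}" for v
    using assms[OF that] by (intro restrict_ext) auto
  then show ?thesis
    unfolding kernel_prod_def using assms by (intro prod.cong) auto
qed

lemma kernel_prod_split:
  assumes "finite S" "H \<subseteq> S"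
  shows "kernel_prod S z = kernel_prod (S - H) z * kernel_prod H z"
proof -
  have "S - {X} = (S - H - {X}) \<union> (H - {X})" using assms(2) by auto
  moreover have "finite (S - H - {X})" "finite (H - {X})" using assms finite_subset by auto
  ultimately show ?thesis
    unfolding kernel_prod_def by (simp only:) (rule prod.union_disjoint, auto)
qed

lemma sum_kernels_PiE_eq_1:
  assumes "finite H" "H \<subseteq> Vs - {X}" "\<And>u. u \<in> Vs - H \<Longrightarrow> g u \<in> A u"
  shows "(\<Sum>h\<in>PiE H A. kernel_prod H (override_on g h H)) = 1"
  using assms
proof (induction H arbitrary: g rule: finite_linorder_max_induct)
  case (insert m H)
  \<comment> \<open>the largest vertex m is nobody's parent inside insert m H, so it can be summed out first\<close>
  have m: "m \<in> Vs" "m \<noteq> X" "m \<notin> H" using insert by auto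
  obtain a0 where "a0 \<in> A m" using A_nonempty[OF \<open>m \<in> Vs\<close>] by blast
  define g' where "g' = g(m := a0)"
  have split: "kernel_prod (insert m H) (override_on g (h(m := a)) (insert m H))
      = K m (restrict (override_on g' h H) (pa m)) a * kernel_prod H (override_on g' h H)" for h a
  proof -
    have "kernel_prod (insert m H) (override_on g (h(m := a)) (insert m H))
        = kernel_prod (insert m H) ((override_on g' h H)(m := a))"
      using \<open>m \<notin> H\<close> by (auto simp: g'_def override_on_def intro!: arg_cong[where f = "kernel_prod _"])
    also have "\<dots> = K m (restrict (override_on g' h H) (pa m)) a * kernel_prod H (override_on g' h H)"
    proof -
      have "kernel_prod H ((override_on g' h H)(m := a)) = kernel_prod H (override_on g' h H)"
      proof (rule kernel_prod_cong)
        fix v w assume v: "v \<in> H - {X}" and "w \<in> insert v (pa v)"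
        then have "w \<le> v" using pa_less[of v w] insert.prems by fastforce
        moreover have "v < m" using v insert.hyps by auto
        ultimately show "((override_on g' h H)(m := a)) w = override_on g' h H w" by auto
      qed
      moreover have "restrict ((override_on g' h H)(m := a)) (pa m) = restrict (override_on g' h H) (pa m)"
        using pa_less[OF \<open>m \<in> Vs\<close>] by (intro restrict_ext) auto
      ultimately show ?thesis
        unfolding kernel_prod_def using m finite_subset[OF _ \<open>finite H\<close>]
        by (simp add: insert_Diff_if prod.insert[of "H - {X}"])
    qed
    finally show ?thesis .
  qed
  have "(\<Sum>a\<in>A m. K m (restrict (override_on g' h H) (pa m)) a) = 1" if "h \<in> PiE H A" for h
    using that insert.prems \<open>a0 \<in> A m\<close> pa_subset[OF \<open>m \<in> Vs\<close>]
    by (intro K_sum m) (auto simp: PiE_iff g'_def override_on_def)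
  then have "(\<Sum>h\<in>PiE (insert m H) A. kernel_prod (insert m H) (override_on g h (insert m H)))
      = (\<Sum>h\<in>PiE H A. kernel_prod H (override_on g' h H))"
    unfolding sum_PiE_insert[OF \<open>m \<notin> H\<close>] split
    by (subst sum.swap) (simp add: sum_distrib_right[symmetric])
  also have "\<dots> = 1"
    using insert.prems \<open>a0 \<in> A m\<close> by (intro insert.IH) (auto simp: g'_def)
  finally show ?case .
qed (simp add: kernel_prod_def)

lemma sum_kernel_prod_marginalize:
  assumes H: "H \<subseteq> Vs - {X}" and closed: "\<And>v u. v \<in> Vs - H - {X} \<Longrightarrow> u \<in> pa v \<Longrightarrow> u \<notin> H"
  shows "(\<Sum>z\<in>PiE Vs A. kernel_prod Vs z * G (restrict z (Vs - H)))
       = (\<Sum>l\<in>PiE (Vs - H) A. kernel_prod (Vs - H) l * G l)"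
proof -
  have "finite H" using H finite_Vs finite_subset by blast
  have inner: "(\<Sum>h\<in>PiE H A. kernel_prod Vs (override_on l h H) * G (restrict (override_on l h H) (Vs - H)))
      = kernel_prod (Vs - H) l * G l" if l: "l \<in> PiE (Vs - H) A" for l
  proof -
    have "restrict (override_on l h H) (Vs - H) = l" for h
      using l by (auto simp: PiE_iff extensional_def override_on_def fun_eq_iff)
    moreover have "kernel_prod (Vs - H) (override_on l h H) = kernel_prod (Vs - H) l" for h
      using closed by (intro kernel_prod_cong) auto
    moreover have "(\<Sum>h\<in>PiE H A. kernel_prod H (override_on l h H)) = 1"
      using l \<open>finite H\<close> H by (intro sum_kernels_PiE_eq_1) (auto simp: PiE_iff)
    moreover have "kernel_prod Vs z = kernel_prod (Vs - H) z * kernel_prod H z" for z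
      using kernel_prod_split[OF finite_Vs] H by blast
    ultimately show ?thesis
      by (simp add: sum_distrib_left[symmetric] sum_distrib_right[symmetric] mult_ac)
  qed
  have "H \<subseteq> Vs" using H by blast
  then have "(\<Sum>z\<in>PiE Vs A. kernel_prod Vs z * G (restrict z (Vs - H)))
      = (\<Sum>l\<in>PiE (Vs - H) A. \<Sum>h\<in>PiE H A.
           kernel_prod Vs (override_on l h H) * G (restrict (override_on l h H) (Vs - H)))"
    by (rule sum_PiE_split)
  also have "\<dots> = (\<Sum>l\<in>PiE (Vs - H) A. kernel_prod (Vs - H) l * G l)"
    using inner by (rule sum.cong[OF refl])
  finally show ?thesis .
qed

lemma sum_kernel_prod_remove_leaf:
  assumes "S \<subseteq> Vs" "W \<in> S" "W \<noteq> X" and leaf: "\<And>v. v \<in> S - {X} \<Longrightarrow> W \<notin> pa v"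
  shows "(\<Sum>l\<in>PiE S A. kernel_prod S l * G l)
       = (\<Sum>g\<in>PiE (S - {W}) A. kernel_prod (S - {W}) g * (\<Sum>a\<in>A W. K W (restrict g (pa W)) a * G (g(W := a))))"
proof -
  have "S = insert W (S - {W})" using assms(2) by auto
  have "finite S" using assms(1) finite_Vs finite_subset by blast
  have "kernel_prod S (g(W := a)) = kernel_prod (S - {W}) g * K W (restrict g (pa W)) a" for g a
  proof -
    have "kernel_prod (S - {W}) (g(W := a)) = kernel_prod (S - {W}) g"
      using leaf by (intro kernel_prod_cong) auto
    moreover have "kernel_prod {W} (g(W := a)) = K W (restrict g (pa W)) a"
    proof -
      have "W \<notin> pa W" using pa_less[of W W] assms(1,2) by blast
      then show ?thesis using \<open>W \<noteq> X\<close> by (simp add: kernel_prod_def)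
    qed
    ultimately show ?thesis
      using kernel_prod_split[OF \<open>finite S\<close>, of "{W}"] assms(2) by simp
  qed
  then show ?thesis
    by (subst \<open>S = insert W (S - {W})\<close>, subst sum_PiE_insert)
      (auto simp: sum_distrib_left mult_ac intro: sum.swap)
qed

lemma sum_kernel_prod_node_value:
  assumes W: "W \<in> Vs" "W \<noteq> X" and V: "V \<subseteq> Vs" "\<And>v. v \<in> V \<Longrightarrow> v < W" and "w \<in> A W"
  shows "(\<Sum>z\<in>PiE Vs A. if z X = x \<and> restrict z V = b \<and> z W = w then kernel_prod Vs z else 0)
       = (\<Sum>z\<in>PiE Vs A. if z X = x \<and> restrict z V = b then kernel_prod Vs z * K W (restrict z (pa W)) w else 0)"
proof -
  \<comment> \<open>after summing out the vertices above W, the vertex W is a leaf\<close>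
  define H where "H = {v\<in>Vs. W < v} - {X}"
  define S where "S = Vs - H"
  define G1 :: "('v \<Rightarrow> 'a) \<Rightarrow> real"
    where "G1 l = (if l X = x \<and> restrict l V = b \<and> l W = w then 1 else 0)" for l
  define G2 where "G2 l = (if l X = x \<and> restrict l V = b then K W (restrict l (pa W)) w else 0)"
    for l :: "'v \<Rightarrow> 'a"
  have H: "H \<subseteq> Vs - {X}" and closed: "\<And>v u. v \<in> Vs - H - {X} \<Longrightarrow> u \<in> pa v \<Longrightarrow> u \<notin> H"
    unfolding H_def using pa_less by fastforce+
  have "S \<subseteq> Vs" "X \<in> S" "W \<in> S" "V \<subseteq> S" "pa W \<subseteq> S - {W}" and leaf: "\<And>v. v \<in> S - {X} \<Longrightarrow> W \<notin> pa v"
    unfolding S_def H_def using X_in_Vs W V pa_less pa_subset by fastforce+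
  have reduce: "(\<Sum>z\<in>PiE Vs A. kernel_prod Vs z * G (restrict z S))
      = (\<Sum>g\<in>PiE (S - {W}) A. kernel_prod (S - {W}) g * (\<Sum>a\<in>A W. K W (restrict g (pa W)) a * G (g(W := a))))"
    for G
  proof -
    have "(\<Sum>z\<in>PiE Vs A. kernel_prod Vs z * G (restrict z S)) = (\<Sum>l\<in>PiE S A. kernel_prod S l * G l)"
      unfolding S_def by (rule sum_kernel_prod_marginalize[OF H closed])
    also have "\<dots> = (\<Sum>g\<in>PiE (S - {W}) A. kernel_prod (S - {W}) g
        * (\<Sum>a\<in>A W. K W (restrict g (pa W)) a * G (g(W := a))))"
      by (rule sum_kernel_prod_remove_leaf[OF \<open>S \<subseteq> Vs\<close> \<open>W \<in> S\<close> W(2) leaf])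
    finally show ?thesis .
  qed
  have "(\<Sum>a\<in>A W. K W (restrict g (pa W)) a * G1 (g(W := a)))
      = (\<Sum>a\<in>A W. K W (restrict g (pa W)) a * G2 (g(W := a)))" if "g \<in> PiE (S - {W}) A" for g
  proof -
    have "W \<notin> V" "W \<notin> pa W" using V(2) pa_less[OF W(1)] by blast+
    moreover have "(\<Sum>a\<in>A W. K W (restrict g (pa W)) a) = 1"
      using W \<open>pa W \<subseteq> S - {W}\<close> that by (intro K_sum restrict_in_PiE) auto
    ultimately show ?thesis
      unfolding G1_def G2_def using W(2) \<open>w \<in> A W\<close> finite_A[OF W(1)]
      by (cases "g X = x \<and> restrict g V = b")
        (auto simp: sum_distrib_right[symmetric] if_distrib[of "\<lambda>t. _ * t"] cong: if_cong)
  qed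
  then have "(\<Sum>z\<in>PiE Vs A. kernel_prod Vs z * G1 (restrict z S))
      = (\<Sum>z\<in>PiE Vs A. kernel_prod Vs z * G2 (restrict z S))"
    unfolding reduce by (intro sum.cong) auto
  moreover have "S \<inter> V = V" "S \<inter> pa W = pa W" using \<open>V \<subseteq> S\<close> \<open>pa W \<subseteq> S - {W}\<close> by auto
  ultimately show ?thesis
    unfolding G1_def G2_def using \<open>X \<in> S\<close> \<open>W \<in> S\<close> by (simp add: if_distrib[of "\<lambda>t. _ * t"] cong: if_cong)
qed

lemma net_kernel_eq:
  "net_kernel Vs pa A K X S x y = (\<Sum>z\<in>PiE Vs A. if z X = x \<and> restrict z S = y then kernel_prod Vs z else 0)"
  unfolding net_kernel_def kernel_prod_def using finite_PiE_A[of Vs] by (simp add: sum.inter_filter)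

lemma net_kernel_nonneg: "0 \<le> net_kernel Vs pa A K X S x y"
  unfolding net_kernel_eq by (intro sum_nonneg) (auto intro: kernel_prod_nonneg)

lemma sum_net_kernel_mult:
  assumes "T \<subseteq> Vs"
  shows "(\<Sum>y\<in>PiE T A. net_kernel Vs pa A K X T x y * F y)
       = (\<Sum>z\<in>PiE Vs A. if z X = x then kernel_prod Vs z * F (restrict z T) else 0)"
proof -
  have "(\<Sum>y\<in>PiE T A. if z X = x \<and> restrict z T = y then kernel_prod Vs z * F y else 0)
      = (if z X = x then kernel_prod Vs z * F (restrict z T) else 0)" if "z \<in> PiE Vs A" for z
    using finite_PiE_A[OF assms] restrict_in_PiE[OF that assms] by (simp add: sum.delta)
  then show ?thesis
    unfolding net_kernel_eq sum_distrib_right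
    by (subst sum.swap) (simp add: if_distrib[of "\<lambda>t. t * _"] cong: if_cong)
qed

lemma net_kernel_sum:
  assumes "S \<subseteq> Vs" "x \<in> A X"
  shows "(\<Sum>y\<in>PiE S A. net_kernel Vs pa A K X S x y) = 1"
proof -
  have "Vs - (Vs - {X}) = {X}" using X_in_Vs by auto
  then have "(\<Sum>z\<in>PiE Vs A. kernel_prod Vs z * (if restrict z (Vs - (Vs - {X})) X = x then 1 else 0))
      = (\<Sum>l\<in>PiE {X} A. if l X = x then 1 else 0)"
    by (subst sum_kernel_prod_marginalize) (auto simp: kernel_prod_def)
  also have "\<dots> = 1"
    using sum_PiE_insert[where x = X and S = "{}" and T = A and g = "\<lambda>l. if l X = x then 1 else (0::real)"]
      assms(2) finite_A[OF X_in_Vs]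
    by simp
  finally show ?thesis
    using sum_net_kernel_mult[OF assms(1), of x "\<lambda>_. 1"] X_in_Vs
    by (simp add: if_distrib[of "\<lambda>t. _ * t"] cong: if_cong)
qed

lemma sum_net_kernel_fiber:
  assumes "V \<subseteq> T" "T \<subseteq> Vs"
  shows "(\<Sum>y\<in>{y\<in>PiE T A. restrict y V = b}. net_kernel Vs pa A K X T x y) = net_kernel Vs pa A K X V x b"
proof -
  have "(\<Sum>y\<in>{y\<in>PiE T A. restrict y V = b}. net_kernel Vs pa A K X T x y)
      = (\<Sum>y\<in>PiE T A. net_kernel Vs pa A K X T x y * (if restrict y V = b then 1 else 0))"
    using finite_PiE_A[OF assms(2)] by (simp add: sum.inter_filter if_distrib[of "\<lambda>t. _ * t"] cong: if_cong)
  also have "\<dots> = net_kernel Vs pa A K X V x b"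
    unfolding sum_net_kernel_mult[OF assms(2)] net_kernel_eq[of V] using assms(1)
    by (intro sum.cong) (auto simp: Int_absorb1)
  finally show ?thesis .
qed

lemma net_kernel_add_node:
  assumes W: "W \<in> Vs" "W \<noteq> X" "W \<notin> V" and V: "V \<subseteq> Vs" "\<And>v. v \<in> V \<Longrightarrow> v < W"
    and "b \<in> PiE V A" "w \<in> A W"
  shows "net_kernel Vs pa A K X (V \<union> {W}) x (b(W := w))
       = (\<Sum>y\<in>{y\<in>PiE (V \<union> pa W) A. restrict y V = b}.
            net_kernel Vs pa A K X (V \<union> pa W) x y * K W (restrict y (pa W)) w)"
proof -
  define T where "T = V \<union> pa W"
  have "T \<subseteq> Vs" "T \<inter> V = V" "T \<inter> pa W = pa W" unfolding T_def using V pa_subset[OF W(1)] by auto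
  have restrict_iff: "restrict z (V \<union> {W}) = b(W := w) \<longleftrightarrow> restrict z V = b \<and> z W = w" for z
    using \<open>b \<in> PiE V A\<close> W(3) by (auto simp: fun_eq_iff PiE_iff extensional_def split: if_splits)
  have "(\<Sum>y\<in>{y\<in>PiE T A. restrict y V = b}. net_kernel Vs pa A K X T x y * K W (restrict y (pa W)) w)
      = (\<Sum>y\<in>PiE T A. net_kernel Vs pa A K X T x y
           * (if restrict y V = b then K W (restrict y (pa W)) w else 0))"
    using finite_PiE_A[OF \<open>T \<subseteq> Vs\<close>] by (simp add: sum.inter_filter if_distrib[of "\<lambda>t. _ * t"] cong: if_cong)
  also have "\<dots> = (\<Sum>z\<in>PiE Vs A.
      if z X = x \<and> restrict z V = b then kernel_prod Vs z * K W (restrict z (pa W)) w else 0)"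
    unfolding sum_net_kernel_mult[OF \<open>T \<subseteq> Vs\<close>] using \<open>T \<inter> V = V\<close> \<open>T \<inter> pa W = pa W\<close>
    by (intro sum.cong) auto
  also have "\<dots> = net_kernel Vs pa A K X (V \<union> {W}) x (b(W := w))"
    unfolding net_kernel_eq restrict_iff
    by (rule sum_kernel_prod_node_value[OF W(1,2) V \<open>w \<in> A W\<close>, symmetric])
  finally show ?thesis unfolding T_def ..
qed

definition joint_law :: "'v set \<Rightarrow> ('u \<Rightarrow> 'a \<Rightarrow> real) \<Rightarrow> 'u \<Rightarrow> ('v \<Rightarrow> 'a) \<Rightarrow> real" where
  "joint_law S p u y = (\<Sum>x\<in>A X. p u x * net_kernel Vs pa A K X S x y)"

lemma joint_law_nonneg: "is_pmf2 SU (A X) p \<Longrightarrow> u \<in> SU \<Longrightarrow> 0 \<le> joint_law S p u y"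
  unfolding joint_law_def is_pmf2_def by (auto intro!: sum_nonneg mult_nonneg_nonneg net_kernel_nonneg)

lemma sum_fiber_joint_law:
  assumes "V \<subseteq> T" "T \<subseteq> Vs"
  shows "(\<Sum>y\<in>{y\<in>PiE T A. restrict y V = b}. joint_law T p u y) = joint_law V p u b"
  unfolding joint_law_def
  by (subst sum.swap) (simp add: sum_distrib_left[symmetric] sum_net_kernel_fiber[OF assms])

lemma pushforward_restrict_joint_law:
  assumes "V \<subseteq> T" "T \<subseteq> Vs"
  shows "pushforward (\<lambda>y. restrict y V) (PiE T A) (joint_law T p) = joint_law V p"
  unfolding pushforward_def sum_fiber_joint_law[OF assms] ..

lemma joint_law_sum:
  assumes "is_pmf2 SU (A X) p" "S \<subseteq> Vs"
  shows "(\<Sum>u\<in>SU. \<Sum>y\<in>PiE S A. joint_law S p u y) = 1"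
  using assms net_kernel_sum unfolding joint_law_def is_pmf2_def
  by (subst sum.swap) (simp add: sum_distrib_left[symmetric])

lemma joint_law_add_node:
  assumes "W \<in> Vs" "W \<noteq> X" "W \<notin> V" "V \<subseteq> Vs" "\<And>v. v \<in> V \<Longrightarrow> v < W" "b \<in> PiE V A" "w \<in> A W"
  shows "joint_law (V \<union> {W}) p u (b(W := w))
       = (\<Sum>y\<in>{y\<in>PiE (V \<union> pa W) A. restrict y V = b}. joint_law (V \<union> pa W) p u y * K W (restrict y (pa W)) w)"
proof -
  have "joint_law (V \<union> {W}) p u (b(W := w)) = (\<Sum>x\<in>A X. \<Sum>y\<in>{y\<in>PiE (V \<union> pa W) A. restrict y V = b}.
      p u x * net_kernel Vs pa A K X (V \<union> pa W) x y * K W (restrict y (pa W)) w)"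
    unfolding joint_law_def using net_kernel_add_node[OF assms] by (simp add: sum_distrib_left mult.assoc)
  then show ?thesis
    unfolding joint_law_def by (subst (asm) sum.swap) (simp add: sum_distrib_right)
qed

lemma mutual_info_joint_law_mono:
  assumes "V \<subseteq> T" "T \<subseteq> Vs" "is_pmf2 SU (A X) p"
  shows "mutual_info SU (PiE V A) (joint_law V p) \<le> mutual_info SU (PiE T A) (joint_law T p)"
proof -
  have "finite SU" using assms(3) unfolding is_pmf2_def by blast
  then show ?thesis
    unfolding pushforward_restrict_joint_law[OF assms(1,2), symmetric] using assms(1,2)
    by (intro mutual_info_pushforward_le)
      (auto intro: restrict_in_PiE joint_law_nonneg[OF assms(3)] finite_PiE_A)
qed

lemma channel_net_kernel: "S \<subseteq> Vs \<Longrightarrow> channel (A X) (PiE S A) (net_kernel Vs pa A K X S)"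
  unfolding channel_def using finite_A[OF X_in_Vs] A_nonempty[OF X_in_Vs] finite_PiE_A
  by (auto intro: net_kernel_nonneg net_kernel_sum)

lemma channel_node: "W \<in> Vs \<Longrightarrow> W \<noteq> X \<Longrightarrow> channel (PiE (pa W) A) (A W) (K W)"
  unfolding channel_def using finite_PiE_A[OF pa_subset] PiE_A_nonempty[OF pa_subset] finite_A K_nonneg K_sum
  by auto

lemma bounded_curve_node_F_I: "W \<in> Vs \<Longrightarrow> W \<noteq> X \<Longrightarrow> bounded_curve (F_I (PiE (pa W) A) (A W) (K W))"
  by (rule channel.bounded_curve_F_I[OF channel_node])

lemma bounded_curve_net_F: "S \<subseteq> Vs \<Longrightarrow> bounded_curve (net_F Vs pa A K X S)"
  unfolding net_F_def by (rule channel.bounded_curve_F_I[OF channel_net_kernel])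

lemma conditional_info_add_node_le:
  fixes SU :: "nat set"
  assumes W: "W \<in> Vs" "W \<noteq> X" "W \<notin> V" and V: "V \<subseteq> Vs" "\<And>v. v \<in> V \<Longrightarrow> v < W"
    and p: "is_pmf2 SU (A X) p" and b: "b \<in> PiE V A"
  defines "P \<equiv> \<Sum>u\<in>SU. joint_law V p u b"
  shows "P * mutual_info SU {y\<in>PiE (V \<union> {W}) A. restrict y V = b} (\<lambda>u y. joint_law (V \<union> {W}) p u y / P)
       \<le> P * node_F_c pa A K W
              (mutual_info SU {y\<in>PiE (V \<union> pa W) A. restrict y V = b} (\<lambda>u y. joint_law (V \<union> pa W) p u y / P))"
proof (cases "P = 0")
  case False
  define T where "T = V \<union> pa W"
  define fiber where "fiber = {y\<in>PiE T A. restrict y V = b}"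
  define r where "r u y = joint_law T p u y / P" for u y
  interpret node: channel "PiE (pa W) A" "A W" "K W" by (rule channel_node[OF W(1,2)])
  have "T \<subseteq> Vs" "V \<subseteq> T" "pa W \<subseteq> T" unfolding T_def using V pa_subset[OF W(1)] by auto
  have "finite SU" using p unfolding is_pmf2_def by blast
  have "finite fiber" unfolding fiber_def using finite_PiE_A[OF \<open>T \<subseteq> Vs\<close>] by simp
  have "P > 0" using False joint_law_nonneg[OF p] unfolding P_def by (smt (verit) sum_nonneg)
  have "(\<Sum>y\<in>fiber. joint_law T p u y) = joint_law V p u b" for u
    unfolding fiber_def by (rule sum_fiber_joint_law[OF \<open>V \<subseteq> T\<close> \<open>T \<subseteq> Vs\<close>])
  then have "is_pmf2 SU fiber r"
    unfolding is_pmf2_def r_def using \<open>finite SU\<close> \<open>finite fiber\<close> joint_law_nonneg[OF p] \<open>P > 0\<close>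
    by (simp add: sum_divide_distrib[symmetric] flip: P_def)
  have "mutual_info SU {y\<in>PiE (V \<union> {W}) A. restrict y V = b} (\<lambda>u y. joint_law (V \<union> {W}) p u y / P)
      = mutual_info SU (A W) (\<lambda>u w. \<Sum>y\<in>fiber. r u y * K W (restrict y (pa W)) w)"
  proof (subst mutual_info_reindex[OF bij_betw_fun_upd_fiber[OF b W(3)]], rule mutual_info_cong)
    fix u w assume "w \<in> A W"
    show "joint_law (V \<union> {W}) p u (b(W := w)) / P = (\<Sum>y\<in>fiber. r u y * K W (restrict y (pa W)) w)"
      using joint_law_add_node[OF W V b \<open>w \<in> A W\<close>, of p u]
      unfolding r_def fiber_def T_def by (simp add: sum_divide_distrib)
  qed
  also have "\<dots> \<le> node_F_c pa A K W (mutual_info SU fiber r)"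
    unfolding node_F_c_def F_I_c_def using \<open>pa W \<subseteq> T\<close>
    by (intro node.mutual_info_through_channel_le[OF \<open>is_pmf2 SU fiber r\<close>])
      (auto simp: fiber_def intro: restrict_in_PiE)
  finally show ?thesis
    using \<open>P > 0\<close> unfolding fiber_def r_def T_def by simp
qed simp

lemma mutual_info_joint_law_chain_rule:
  assumes "V \<subseteq> S" "S \<subseteq> Vs" "is_pmf2 SU (A X) p"
  defines "P b \<equiv> \<Sum>u\<in>SU. joint_law V p u b"
  shows "mutual_info SU (PiE S A) (joint_law S p) = mutual_info SU (PiE V A) (joint_law V p)
     + (\<Sum>b\<in>PiE V A. P b * mutual_info SU {y\<in>PiE S A. restrict y V = b} (\<lambda>u y. joint_law S p u y / P b))"
proof -
  have "finite SU" using assms(3) unfolding is_pmf2_def by blast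
  moreover have "(\<lambda>y. restrict y V) ` PiE S A \<subseteq> PiE V A" using assms(1) by (auto intro: restrict_in_PiE)
  ultimately show ?thesis
    using mutual_info_chain_rule[of SU "PiE S A" "PiE V A" "\<lambda>y. restrict y V" "joint_law S p"]
      assms(1,2) finite_PiE_A[of S] finite_PiE_A[of V] joint_law_nonneg[OF assms(3)]
    unfolding pushforward_restrict_joint_law[OF assms(1,2)] P_def by auto
qed

lemma mutual_info_add_node_le:
  fixes SU :: "nat set"
  assumes W: "W \<in> Vs" "W \<noteq> X" "W \<notin> V" and V: "V \<subseteq> Vs" "\<And>v. v \<in> V \<Longrightarrow> v < W"
    and p: "is_pmf2 SU (A X) p"
  shows "mutual_info SU (PiE (V \<union> {W}) A) (joint_law (V \<union> {W}) p)
     \<le> mutual_info SU (PiE V A) (joint_law V p)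
       + node_F_c pa A K W (mutual_info SU (PiE (V \<union> pa W) A) (joint_law (V \<union> pa W) p)
                            - mutual_info SU (PiE V A) (joint_law V p))"
proof -
  define T where "T = V \<union> pa W"
  define P where "P b = (\<Sum>u\<in>SU. joint_law V p u b)" for b
  define I where "I S b = mutual_info SU {y\<in>PiE S A. restrict y V = b} (\<lambda>u y. joint_law S p u y / P b)" for S b
  define h where "h = node_F_c pa A K W"
  interpret node: bounded_curve "F_I (PiE (pa W) A) (A W) (K W)"
    by (rule bounded_curve_node_F_I[OF W(1,2)])
  have "T \<subseteq> Vs" "V \<subseteq> T" unfolding T_def using V pa_subset[OF W(1)] by auto
  have "finite SU" using p unfolding is_pmf2_def by blast
  have P_nonneg: "0 \<le> P b" for b unfolding P_def using joint_law_nonneg[OF p] by (simp add: sum_nonneg)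
  have "(\<Sum>b\<in>PiE V A. P b) = 1"
    unfolding P_def using joint_law_sum[OF p V(1)] by (subst sum.swap) simp
  have "0 \<le> I T b" for b
  proof -
    have "P b = (\<Sum>u\<in>SU. \<Sum>y\<in>{y\<in>PiE T A. restrict y V = b}. joint_law T p u y)"
      unfolding P_def sum_fiber_joint_law[OF \<open>V \<subseteq> T\<close> \<open>T \<subseteq> Vs\<close>] ..
    then show ?thesis
      unfolding I_def using \<open>finite SU\<close> finite_PiE_A[OF \<open>T \<subseteq> Vs\<close>] joint_law_nonneg[OF p]
      by (simp add: mutual_info_normalized_nonneg)
  qed
  have "(\<Sum>b\<in>PiE V A. P b * I (V \<union> {W}) b) \<le> (\<Sum>b\<in>PiE V A. P b * h (I T b))"
    unfolding I_def h_def T_def P_def by (intro sum_mono conditional_info_add_node_le[OF W V p])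
  also have "\<dots> \<le> h (\<Sum>b\<in>PiE V A. P b * I T b)"
    using concave_on_sum[OF finite_PiE_A[OF V(1)] PiE_A_nonempty[OF V(1)] node.concave_on_concave_majorant
        \<open>(\<Sum>b\<in>PiE V A. P b) = 1\<close>, of "I T"] P_nonneg \<open>\<And>b. 0 \<le> I T b\<close>
    unfolding h_def node_F_c_def F_I_c_def by simp
  finally have "(\<Sum>b\<in>PiE V A. P b * I (V \<union> {W}) b) \<le> h (\<Sum>b\<in>PiE V A. P b * I T b)" .
  moreover have "V \<subseteq> V \<union> {W}" "V \<union> {W} \<subseteq> Vs" using V(1) W(1) by auto
  ultimately show ?thesis
    using mutual_info_joint_law_chain_rule[OF \<open>V \<subseteq> V \<union> {W}\<close> \<open>V \<union> {W} \<subseteq> Vs\<close> p]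
      mutual_info_joint_law_chain_rule[OF \<open>V \<subseteq> T\<close> \<open>T \<subseteq> Vs\<close> p]
    unfolding I_def P_def h_def T_def by simp
qed

lemma compose_net_kernel_eq_joint_law:
  "(\<lambda>u y. \<Sum>x\<in>A X. p u x * net_kernel Vs pa A K X S x y) = joint_law S p"
  unfolding joint_law_def ..

lemma net_F_mono:
  assumes "V \<subseteq> T" "T \<subseteq> Vs" "t \<ge> 0"
  shows "net_F Vs pa A K X V t \<le> net_F Vs pa A K X T t"
proof -
  interpret V: channel "A X" "PiE V A" "net_kernel Vs pa A K X V"
    using assms by (intro channel_net_kernel) auto
  interpret T: channel "A X" "PiE T A" "net_kernel Vs pa A K X T"
    using assms by (intro channel_net_kernel)
  show ?thesis
    unfolding net_F_def V.F_I_le_iff[OF \<open>t \<ge> 0\<close>]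
    using mutual_info_joint_law_mono[OF assms(1,2)] T.mutual_info_le_F_I
    unfolding compose_net_kernel_eq_joint_law by (blast intro: order_trans)
qed

lemma net_F_c_concave_mono:
  assumes "S \<subseteq> Vs"
  shows "concave_on {0..} (net_F_c Vs pa A K X S)" "mono_on {0..} (net_F_c Vs pa A K X S)"
proof -
  interpret bounded_curve "net_F Vs pa A K X S" by (rule bounded_curve_net_F[OF assms])
  show "concave_on {0..} (net_F_c Vs pa A K X S)"
    unfolding net_F_c_eq by (rule concave_on_concave_majorant)
  show "mono_on {0..} (net_F_c Vs pa A K X S)"
    unfolding net_F_c_eq by (intro mono_onI concave_majorant_mono) auto
qed

lemma net_F_c_bounds:
  assumes "V \<subseteq> T" "T \<subseteq> Vs" "t \<ge> 0"
  shows "0 \<le> net_F_c Vs pa A K X V t \<and> net_F_c Vs pa A K X V t \<le> net_F_c Vs pa A K X T t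
    \<and> net_F_c Vs pa A K X T t \<le> t"
proof -
  interpret V: bounded_curve "net_F Vs pa A K X V" using assms by (intro bounded_curve_net_F) auto
  interpret T: bounded_curve "net_F Vs pa A K X T" by (rule bounded_curve_net_F[OF assms(2)])
  have "net_F_c Vs pa A K X V t \<le> net_F_c Vs pa A K X T t"
    unfolding net_F_c_eq using net_F_mono[OF assms(1,2)] \<open>t \<ge> 0\<close>
    by (intro concave_majorant_le_concave_majorant[OF V.bounded_curve_axioms T.bounded_curve_axioms])
  then show ?thesis
    using V.concave_majorant_nonneg[OF \<open>t \<ge> 0\<close>] T.concave_majorant_le_id[OF \<open>t \<ge> 0\<close>]
    unfolding net_F_c_eq by simp
qed

context
  fixes W :: 'v and V :: "'v set"
  assumes W: "W \<in> Vs" "W \<noteq> X" "W \<notin> V" and V: "V \<subseteq> Vs" "\<And>v. v \<in> V \<Longrightarrow> v < W"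
begin

lemma net_F_add_node_le:
  assumes "t \<ge> 0"
  shows "net_F Vs pa A K X (V \<union> {W}) t
      \<le> net_F Vs pa A K X V t + node_F_c pa A K W (net_F Vs pa A K X (V \<union> pa W) t - net_F Vs pa A K X V t)"
proof -
  have "V \<union> pa W \<subseteq> Vs" "V \<union> {W} \<subseteq> Vs" using V pa_subset[OF W(1)] W(1) by auto
  interpret node: bounded_curve "F_I (PiE (pa W) A) (A W) (K W)"
    by (rule bounded_curve_node_F_I[OF W(1,2)])
  interpret VW: channel "A X" "PiE (V \<union> {W}) A" "net_kernel Vs pa A K X (V \<union> {W})"
    using \<open>V \<union> {W} \<subseteq> Vs\<close> by (rule channel_net_kernel)
  interpret V: channel "A X" "PiE V A" "net_kernel Vs pa A K X V"
    using V(1) by (rule channel_net_kernel)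
  interpret T: channel "A X" "PiE (V \<union> pa W) A" "net_kernel Vs pa A K X (V \<union> pa W)"
    using \<open>V \<union> pa W \<subseteq> Vs\<close> by (rule channel_net_kernel)
  show ?thesis
    unfolding net_F_def VW.F_I_le_iff[OF \<open>t \<ge> 0\<close>] compose_net_kernel_eq_joint_law
  proof (intro allI impI)
    fix SU :: "nat set" and p
    assume p: "is_pmf2 SU (A X) p" and "mutual_info SU (A X) p \<le> t"
    then have "mutual_info SU (PiE V A) (joint_law V p) \<le> net_F Vs pa A K X V t"
      "mutual_info SU (PiE (V \<union> pa W) A) (joint_law (V \<union> pa W) p) \<le> net_F Vs pa A K X (V \<union> pa W) t"
      using V.mutual_info_le_F_I T.mutual_info_le_F_I unfolding net_F_def compose_net_kernel_eq_joint_law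
      by blast+
    moreover have "mutual_info SU (PiE V A) (joint_law V p)
        \<le> mutual_info SU (PiE (V \<union> pa W) A) (joint_law (V \<union> pa W) p)"
      using \<open>V \<union> pa W \<subseteq> Vs\<close> by (intro mutual_info_joint_law_mono[OF _ _ p]) auto
    moreover have "net_F Vs pa A K X V t \<le> net_F Vs pa A K X (V \<union> pa W) t"
      using \<open>V \<union> pa W \<subseteq> Vs\<close> \<open>t \<ge> 0\<close> by (intro net_F_mono) auto
    ultimately have "mutual_info SU (PiE V A) (joint_law V p)
          + node_F_c pa A K W (mutual_info SU (PiE (V \<union> pa W) A) (joint_law (V \<union> pa W) p)
                               - mutual_info SU (PiE V A) (joint_law V p))
        \<le> net_F Vs pa A K X V t
          + node_F_c pa A K W (net_F Vs pa A K X (V \<union> pa W) t - net_F Vs pa A K X V t)"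
      unfolding node_F_c_eq by (rule node.add_concave_majorant_diff_mono)
    with mutual_info_add_node_le[OF W V p] show "mutual_info SU (PiE (V \<union> {W}) A) (joint_law (V \<union> {W}) p)
        \<le> F_I (A X) (PiE V A) (net_kernel Vs pa A K X V) t
          + node_F_c pa A K W (F_I (A X) (PiE (V \<union> pa W) A) (net_kernel Vs pa A K X (V \<union> pa W)) t
                               - F_I (A X) (PiE V A) (net_kernel Vs pa A K X V) t)"
      unfolding net_F_def by linarith
  qed
qed

lemma net_F_c_add_node_le:
  assumes "t \<ge> 0"
  shows "net_F_c Vs pa A K X (V \<union> {W}) t
      \<le> net_F_c Vs pa A K X V t
        + node_F_c pa A K W (net_F_c Vs pa A K X (V \<union> pa W) t - net_F_c Vs pa A K X V t)"
proof -
  let ?f = "net_F_c Vs pa A K X V" and ?g = "net_F_c Vs pa A K X (V \<union> pa W)"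
  have T: "V \<subseteq> V \<union> pa W" "V \<union> pa W \<subseteq> Vs" "V \<union> {W} \<subseteq> Vs" using V pa_subset[OF W(1)] W(1) by auto
  interpret node: bounded_curve "F_I (PiE (pa W) A) (A W) (K W)"
    by (rule bounded_curve_node_F_I[OF W(1,2)])
  interpret V: bounded_curve "net_F Vs pa A K X V" by (rule bounded_curve_net_F[OF V(1)])
  interpret T: bounded_curve "net_F Vs pa A K X (V \<union> pa W)" by (rule bounded_curve_net_F[OF T(2)])
  interpret VW: bounded_curve "net_F Vs pa A K X (V \<union> {W})" by (rule bounded_curve_net_F[OF T(3)])
  have "net_F Vs pa A K X (V \<union> {W}) s \<le> ?f s + node_F_c pa A K W (?g s - ?f s)" if "s \<ge> 0" for s
  proof -
    have "net_F Vs pa A K X V s + node_F_c pa A K W (net_F Vs pa A K X (V \<union> pa W) s - net_F Vs pa A K X V s)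
        \<le> ?f s + node_F_c pa A K W (?g s - ?f s)"
      unfolding node_F_c_eq
      using V.concave_majorant_ge[OF that] T.concave_majorant_ge[OF that] net_F_mono[OF T(1,2) that]
        net_F_c_bounds[OF T(1,2) that] unfolding net_F_c_eq
      by (intro node.add_concave_majorant_diff_mono) auto
    then show ?thesis using net_F_add_node_le[OF that] by linarith
  qed
  then show ?thesis
    unfolding net_F_c_eq[of Vs pa A K X "V \<union> {W}"]
    using node.concave_on_add_concave_majorant_diff[OF net_F_c_concave_mono[OF V(1)]
        net_F_c_concave_mono[OF T(2)] net_F_c_bounds[OF T(1,2)]] \<open>t \<ge> 0\<close>
    by (intro VW.concave_majorant_least) (auto simp: node_F_c_eq)
qed

end

end

theorem theorem7:
  fixes Vs :: "'v::linorder set" and pa :: "'v \<Rightarrow> 'v set" and A :: "'v \<Rightarrow> 'a set"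
    and K :: "'v \<Rightarrow> ('v \<Rightarrow> 'a) \<Rightarrow> 'a \<Rightarrow> real" and X W :: 'v and V :: "'v set"
  assumes net: "bayes_net Vs pa A K X"
    and W: "W \<in> Vs" "W \<notin> V" "W \<noteq> X"
    and V: "V \<subseteq> Vs" "\<forall>v\<in>V. v < W"
  shows "(\<forall>t\<ge>0. net_F Vs pa A K X (V \<union> {W}) t
            \<le> net_F Vs pa A K X V t
              + node_F_c pa A K W (net_F Vs pa A K X (V \<union> pa W) t - net_F Vs pa A K X V t))
       \<and> (\<forall>t\<ge>0. net_F_c Vs pa A K X (V \<union> {W}) t
            \<le> net_F_c Vs pa A K X V t
              + node_F_c pa A K W (net_F_c Vs pa A K X (V \<union> pa W) t - net_F_c Vs pa A K X V t))
       \<and> (let R = (\<lambda>t. net_F_c Vs pa A K X V t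
              + node_F_c pa A K W (net_F_c Vs pa A K X (V \<union> pa W) t - net_F_c Vs pa A K X V t))
         in (\<forall>t\<ge>0. 0 \<le> R t) \<and> concave_on {0..} R \<and> mono_on {0..} R \<and> (\<forall>t\<ge>0. R t \<le> t))"
proof -
  interpret bayesian_network Vs pa A K X by (rule bayesian_network.intro[OF net])
  interpret node: bounded_curve "F_I (PiE (pa W) A) (A W) (K W)"
    by (rule bounded_curve_node_F_I[OF W(1,3)])
  have W': "W \<in> Vs" "W \<noteq> X" "W \<notin> V" and V': "V \<subseteq> Vs" "\<And>v. v \<in> V \<Longrightarrow> v < W"
    using W V by auto
  have T: "V \<subseteq> V \<union> pa W" "V \<union> pa W \<subseteq> Vs" using V pa_subset[OF W(1)] by auto
  note envelopes = net_F_c_concave_mono[OF V(1)] net_F_c_concave_mono[OF T(2)] net_F_c_bounds[OF T]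
  show ?thesis
    unfolding Let_def
    using net_F_add_node_le[OF W' V'] net_F_c_add_node_le[OF W' V']
      node.concave_on_add_concave_majorant_diff[OF envelopes]
      node.mono_on_add_concave_majorant_diff[OF envelopes]
      node.add_concave_majorant_diff_bounds[OF envelopes]
    unfolding node_F_c_eq by simp
qed

end
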